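(* Let $k\ge 2$ be an integer. Then $\frac{k}{k+1}\le f(k,2)\le \frac{k+1}{k+2+\frac{1}{k+1}}$.
   Context: For a graph $G=(V,E)$ and an integer $k\ge 0$, a $k$-independent set is a set $S\subseteq V$ such that the induced subgraph $G[S]$ has maximum degree at most $k$; $\alpha_k(G)$ denotes the maximum cardinality of a $k$-independent set of $G$. $n(G)$ is the number of vertices and $d(G)=2|E(G)|/n(G)$ the average degree. For integers $d,k\ge 0$, $f(k,d)=\inf\left\{\frac{\alpha_k(G)}{n(G)} : G \text{ a finite simple graph with at least one vertex and } d(G)\le d\right\}$. *)

theory Defs
  imports Main Complex_Main
begin

definition simple_graph :: "'a set \<Rightarrow> 'a set set \<Rightarrow> bool" where
  "simple_graph V E \<longleftrightarrow> finite V \<and> (\<forall>e\<in>E. e \<subseteq> V \<and> card e = 2)"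

definition k_independent :: "'a set \<Rightarrow> 'a set set \<Rightarrow> nat \<Rightarrow> 'a set \<Rightarrow> bool" where
  "k_independent V E k S \<longleftrightarrow> S \<subseteq> V \<and> (\<forall>v\<in>S. card {w\<in>S. {v, w} \<in> E} \<le> k)"

definition alpha_k :: "'a set \<Rightarrow> 'a set set \<Rightarrow> nat \<Rightarrow> nat" where
  "alpha_k V E k = Max (card ` {S. k_independent V E k S})"

definition avg_degree :: "'a set \<Rightarrow> 'a set set \<Rightarrow> real" where
  "avg_degree V E = 2 * real (card E) / real (card V)"

text \<open>Infimum over all finite simple graphs with at least one vertex; every finite graph is
  isomorphic to one with vertices in nat, so vertices are taken from nat.\<close>
definition f_kd :: "nat \<Rightarrow> nat \<Rightarrow> real" where
  "f_kd k d = Inf {real (alpha_k V E k) / real (card V) | (V :: nat set) E.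
                    simple_graph V E \<and> V \<noteq> {} \<and> avg_degree V E \<le> real d}"

end

theory Submission
  imports Defs
begin

(* Greedy deletion: while some remaining vertex has more than k remaining
   neighbours, delete it; each deletion destroys at least k+1 edges, so at most |E|/(k+1)
   vertices are deleted and alpha_k(G) >= n - |E|/(k+1).  Average degree at most d means
   |E| <= d n/2, giving f(k,d) >= 1 - d/(2(k+1)); for d = 2 this is k/(k+1).

   An explicit graph on (k+1)(k+2)+1 vertices with equally many edges: k+1 stars
   K_{1,k+1} with vertex sets ("blocks") of size k+2, plus a hub joined to every vertex of the
   last block.  A k-independent set contains at most k+1 vertices of each block, and also of the
   last block together with the hub, so alpha_k <= (k+1)^2, which gives the stated ratio. *)

text \<open>The degree condition does not mention the ambient vertex set, so k-independence
  passes to supersets of it.\<close>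
lemma k_independent_mono:
  assumes "k_independent V E k S" "V \<subseteq> W"
  shows "k_independent W E k S"
  using assms by (auto simp: k_independent_def)

lemma k_independent_finite:
  assumes "k_independent V E k S" "finite V"
  shows "finite S"
  using assms by (auto simp: k_independent_def intro: finite_subset)

lemma alpha_k_candidates:
  assumes "finite V"
  shows "finite (card ` {S. k_independent V E k S})"
    and "card ` {S. k_independent V E k S} \<noteq> {}"
proof -
  have "{S. k_independent V E k S} \<subseteq> Pow V" by (auto simp: k_independent_def)
  then show "finite (card ` {S. k_independent V E k S})"
    using assms by (meson finite_Pow_iff finite_imageI rev_finite_subset)
  have "k_independent V E k {}" by (simp add: k_independent_def)
  then show "card ` {S. k_independent V E k S} \<noteq> {}" by blast
qed

lemma card_le_alpha_k:
  assumes "finite V" "k_independent V E k S"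
  shows "card S \<le> alpha_k V E k"
  unfolding alpha_k_def using alpha_k_candidates[OF assms(1)] assms(2) by (intro Max_ge) auto

lemma alpha_k_le:
  assumes "finite V" "\<And>S. k_independent V E k S \<Longrightarrow> card S \<le> b"
  shows "alpha_k V E k \<le> b"
  unfolding alpha_k_def using alpha_k_candidates[OF assms(1)] assms(2) by (subst Max_le_iff) auto

section \<open>Lower bound: greedy deletion\<close>

text \<open>Deleting vertices of induced degree above k from S leaves a k-independent set T; each
  deletion removes at least k+1 edges of G[S], so at most |E(G[S])|/(k+1) vertices go.\<close>
lemma greedy_deletion:
  assumes "finite S"
  shows "\<exists>T. k_independent S E k T \<and> (k+1) * (card S - card T) \<le> card {e\<in>E. e \<subseteq> S}"
  using assms
proof (induction S rule: finite_psubset_induct)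
  case (psubset S)
  show ?case
  proof (cases "\<forall>v\<in>S. card {w\<in>S. {v,w}\<in>E} \<le> k")
    case True
    then show ?thesis by (intro exI[of _ S]) (simp add: k_independent_def)
  next
    case False
    then obtain v where v: "v \<in> S" "k < card {w\<in>S. {v,w}\<in>E}" by (auto simp: not_le)
    define N where "N = {w\<in>S. {v,w}\<in>E}"
    from v(1) have "S - {v} \<subset> S" by auto
    from psubset.IH[OF this] obtain T where T: "k_independent (S - {v}) E k T"
      "(k+1) * (card (S - {v}) - card T) \<le> card {e\<in>E. e \<subseteq> S - {v}}" by blast
    have "card T \<le> card (S - {v})"
      using T(1) psubset.hyps by (intro card_mono) (auto simp: k_independent_def)
    moreover have "card S = card (S - {v}) + 1"
      using v(1) psubset.hyps by (metis Suc_eq_plus1 card_Suc_Diff1)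
    moreover have "k + 1 \<le> card N" using v(2) by (simp add: N_def)
    moreover have "card {e\<in>E. e \<subseteq> S - {v}} + card N \<le> card {e\<in>E. e \<subseteq> S}"
    proof -
      \<comment> \<open>the edges from v to N lie in S but not in S - {v}\<close>
      have fin: "finite {e\<in>E. e \<subseteq> S}"
        using psubset.hyps by (rule finite_subset[rotated, OF finite_Pow_iff[THEN iffD2]]) auto
      have sub: "{e\<in>E. e \<subseteq> S - {v}} \<union> (\<lambda>w. {v,w}) ` N \<subseteq> {e\<in>E. e \<subseteq> S}"
        using v(1) by (auto simp: N_def)
      have inj: "inj_on (\<lambda>w. {v,w}) N" by (auto simp: inj_on_def doubleton_eq_iff)
      have "card {e\<in>E. e \<subseteq> S - {v}} + card N
          = card ({e\<in>E. e \<subseteq> S - {v}} \<union> (\<lambda>w. {v,w}) ` N)"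
        using inj fin sub
        by (subst card_Un_disjoint) (auto intro: finite_subset simp: card_image)
      also have "\<dots> \<le> card {e\<in>E. e \<subseteq> S}" using card_mono[OF fin sub] .
      finally show ?thesis .
    qed
    ultimately have "(k+1) * (card S - card T) \<le> card {e\<in>E. e \<subseteq> S}"
      using T(2) by (simp add: algebra_simps)
    then show ?thesis using k_independent_mono[OF T(1)] by blast
  qed
qed

lemma alpha_k_deficit:
  assumes "simple_graph V E"
  shows "(k+1) * (card V - alpha_k V E k) \<le> card E"
proof -
  have fV: "finite V" using assms by (simp add: simple_graph_def)
  obtain T where T: "k_independent V E k T" "(k+1) * (card V - card T) \<le> card {e\<in>E. e \<subseteq> V}"
    using greedy_deletion[OF fV] by blast
  have "card T \<le> alpha_k V E k" using card_le_alpha_k[OF fV T(1)] .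
  then have "(k+1) * (card V - alpha_k V E k) \<le> (k+1) * (card V - card T)"
    by (intro mult_le_mono2 diff_le_mono2)
  also have "{e\<in>E. e \<subseteq> V} = E" using assms by (auto simp: simple_graph_def)
  with T(2) have "(k+1) * (card V - card T) \<le> card E" by simp
  finally show ?thesis .
qed

lemma alpha_k_ratio_lower:
  assumes "simple_graph V E" "V \<noteq> {}" "avg_degree V E \<le> real d"
  shows "1 - real d / (2 * real (k+1)) \<le> real (alpha_k V E k) / real (card V)"
proof -
  have n: "0 < real (card V)" using assms(1,2) by (simp add: simple_graph_def card_gt_0_iff)
  have edges: "2 * real (card E) \<le> real d * real (card V)"
    using assms(3) n by (simp add: avg_degree_def divide_le_eq)
  have "real (k+1) * (real (card V) - real (alpha_k V E k)) \<le> real (card E)"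
  proof -
    have "real (k+1) * (real (card V) - real (alpha_k V E k))
        \<le> real (k+1) * real (card V - alpha_k V E k)" by (intro mult_left_mono) linarith+
    also have "\<dots> \<le> real (card E)"
      using alpha_k_deficit[OF assms(1), of k] by (metis of_nat_le_iff of_nat_mult)
    finally show ?thesis .
  qed
  with edges have "2 * real (k+1) * (real (card V) - real (alpha_k V E k))
                   \<le> real d * real (card V)" by linarith
  then show ?thesis using n by (simp add: field_simps)
qed

lemma f_kd_ge:
  assumes "\<And>(V :: nat set) E. simple_graph V E \<Longrightarrow> V \<noteq> {} \<Longrightarrow> avg_degree V E \<le> real d
             \<Longrightarrow> c \<le> real (alpha_k V E k) / real (card V)"
  shows "c \<le> f_kd k d"
proof -
  have "simple_graph {0::nat} {} \<and> {0::nat} \<noteq> {} \<and> avg_degree {0::nat} {} \<le> real d"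
    by (simp add: simple_graph_def avg_degree_def)
  then show ?thesis unfolding f_kd_def using assms by (intro cInf_greatest) blast+
qed

lemma f_kd_le:
  assumes "simple_graph (V :: nat set) E" "V \<noteq> {}" "avg_degree V E \<le> real d"
  shows "f_kd k d \<le> real (alpha_k V E k) / real (card V)"
  unfolding f_kd_def using assms by (intro cInf_lower bdd_belowI[of _ 0]) auto

section \<open>Upper bound: an extremal example\<close>

text \<open>If c is adjacent to all of L, a k-independent set containing c meets L in at most k
  vertices, so it meets the closed set {c} \<union> L in at most max (k+1) |S \<inter> L| vertices.\<close>
lemma k_independent_star_bound:
  assumes "k_independent V E k S" "finite V" "\<And>w. w \<in> L \<Longrightarrow> {c, w} \<in> E"
  shows "card (S \<inter> insert c L) \<le> max (k+1) (card (S \<inter> L))"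
proof (cases "c \<in> S")
  case True
  have fS: "finite S" using k_independent_finite[OF assms(1,2)] .
  have "S \<inter> L \<subseteq> {w\<in>S. {c,w}\<in>E}" using assms(3) by auto
  then have "card (S \<inter> L) \<le> card {w\<in>S. {c,w}\<in>E}" using fS by (intro card_mono) auto
  also have "\<dots> \<le> k" using assms(1) True by (simp add: k_independent_def)
  finally have "card (S \<inter> L) \<le> k" .
  moreover have "card (S \<inter> insert c L) \<le> card (S \<inter> L) + 1"
    using True fS by (simp add: card_insert_if)
  ultimately show ?thesis by simp
next
  case False
  then show ?thesis by simp
qed

text \<open>The example graph on vertices 0 .. (k+1)(k+2): block i (i \<le> k) consists of the star
  centre i(k+2) and its k+1 leaves; the hub (k+1)(k+2) is adjacent to all of block k.\<close>
definition centre :: "nat \<Rightarrow> nat \<Rightarrow> nat" where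
  "centre k i = i * (k+2)"

definition leaves :: "nat \<Rightarrow> nat \<Rightarrow> nat set" where
  "leaves k i = {i * (k+2) + 1 ..< i * (k+2) + (k+2)}"

definition block :: "nat \<Rightarrow> nat \<Rightarrow> nat set" where
  "block k i = insert (centre k i) (leaves k i)"

definition hub :: "nat \<Rightarrow> nat" where
  "hub k = (k+1) * (k+2)"

definition ex_V :: "nat \<Rightarrow> nat set" where
  "ex_V k = {..hub k}"

definition ex_E :: "nat \<Rightarrow> nat set set" where
  "ex_E k = (\<Union>i\<le>k. (\<lambda>w. {centre k i, w}) ` leaves k i) \<union> (\<lambda>w. {hub k, w}) ` block k k"

lemma card_leaves [simp]: "card (leaves k i) = k + 1"
  by (simp add: leaves_def)

lemma block_interval: "block k i = {i * (k+2) ..< i * (k+2) + (k+2)}"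
  by (auto simp: block_def centre_def leaves_def)

lemma card_ex_V: "card (ex_V k) = (k+1) * (k+1) + (k+2)"
  by (simp add: ex_V_def hub_def algebra_simps)

lemma block_below_hub: "i \<le> k \<Longrightarrow> w \<in> block k i \<Longrightarrow> w < hub k"
proof -
  assume "i \<le> k" "w \<in> block k i"
  moreover have "i * (k+2) \<le> k * (k+2)" using \<open>i \<le> k\<close> by (rule mult_le_mono1)
  ultimately show "w < hub k" by (auto simp: block_interval hub_def algebra_simps)
qed

lemma ex_V_cover: "ex_V k = (\<Union>i\<le>k. block k i) \<union> {hub k}"
proof
  show "(\<Union>i\<le>k. block k i) \<union> {hub k} \<subseteq> ex_V k"
    using block_below_hub by (fastforce simp: ex_V_def)
  show "ex_V k \<subseteq> (\<Union>i\<le>k. block k i) \<union> {hub k}"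
  proof
    fix v assume v: "v \<in> ex_V k"
    define q where "q = v div (k+2)"
    have v_eq: "v = q * (k+2) + v mod (k+2)" unfolding q_def by (rule div_mult_mod_eq[symmetric])
    have r: "v mod (k+2) < k+2" by simp
    show "v \<in> (\<Union>i\<le>k. block k i) \<union> {hub k}"
    proof (cases "q \<le> k")
      case True
      have "q * (k+2) \<le> v" "v < q * (k+2) + (k+2)" using v_eq r by linarith+
      then have "v \<in> block k q" by (simp add: block_interval)
      with True show ?thesis by blast
    next
      case False
      then have "(k+1) * (k+2) \<le> q * (k+2)" by (intro mult_le_mono1) simp
      then show ?thesis using v v_eq r by (simp add: ex_V_def hub_def)
    qed
  qed
qed

lemma simple_graph_ex: "simple_graph (ex_V k) (ex_E k)"
proof -
  have "e \<subseteq> ex_V k \<and> card e = 2" if "e \<in> ex_E k" for e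
  proof -
    from that consider i w where "i \<le> k" "w \<in> leaves k i" "e = {centre k i, w}"
      | w where "w \<in> block k k" "e = {hub k, w}"
      by (auto simp: ex_E_def)
    then show ?thesis
    proof cases
      case 1
      then have "centre k i \<in> block k i" "w \<in> block k i" "centre k i < w"
        by (auto simp: block_def centre_def leaves_def)
      then show ?thesis using 1 ex_V_cover[of k] by auto
    next
      case 2
      then show ?thesis using block_below_hub[of k k w] ex_V_cover[of k] by auto
    qed
  qed
  then show ?thesis by (simp add: simple_graph_def ex_V_def)
qed

lemma card_ex_E: "card (ex_E k) \<le> card (ex_V k)"
proof -
  have "card (ex_E k) \<le> card (\<Union>i\<le>k. (\<lambda>w. {centre k i, w}) ` leaves k i)
                       + card ((\<lambda>w. {hub k, w}) ` block k k)"
    unfolding ex_E_def by (rule card_Un_le)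
  also have "\<dots> \<le> (\<Sum>i\<le>k. card ((\<lambda>w. {centre k i, w}) ` leaves k i)) + card (block k k)"
    by (intro add_mono card_UN_le card_image_le) (auto simp: block_interval)
  also have "\<dots> \<le> (\<Sum>i\<le>k. card (leaves k i)) + card (block k k)"
    by (intro add_mono sum_mono card_image_le) (auto simp: leaves_def)
  also have "\<dots> = card (ex_V k)" by (simp add: block_interval card_ex_V)
  finally show ?thesis .
qed

lemma avg_degree_ex: "avg_degree (ex_V k) (ex_E k) \<le> 2"
proof -
  have "0 < card (ex_V k)" by (simp add: card_ex_V)
  then show ?thesis using card_ex_E[of k] by (simp add: avg_degree_def divide_le_eq)
qed

text \<open>A k-independent set meets every block in at most k+1 vertices (the centre sees all
  k+1 leaves), and likewise the last block together with the hub (the hub sees the block).\<close>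
lemma ex_block_bound:
  assumes "k_independent (ex_V k) (ex_E k) k S" "i \<le> k"
  shows "card (S \<inter> block k i) \<le> k + 1"
proof -
  have "{centre k i, w} \<in> ex_E k" if "w \<in> leaves k i" for w
    using that assms(2) by (auto simp: ex_E_def)
  then have "card (S \<inter> block k i) \<le> max (k+1) (card (S \<inter> leaves k i))"
    unfolding block_def by (intro k_independent_star_bound[OF assms(1)]) (simp_all add: ex_V_def)
  moreover have "card (S \<inter> leaves k i) \<le> k + 1"
    using card_mono[of "leaves k i" "S \<inter> leaves k i"] by (simp add: leaves_def)
  ultimately show ?thesis by simp
qed

lemma ex_hub_bound:
  assumes "k_independent (ex_V k) (ex_E k) k S"
  shows "card (S \<inter> insert (hub k) (block k k)) \<le> k + 1"
proof -
  have "{hub k, w} \<in> ex_E k" if "w \<in> block k k" for w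
    using that by (auto simp: ex_E_def)
  then have "card (S \<inter> insert (hub k) (block k k)) \<le> max (k+1) (card (S \<inter> block k k))"
    by (intro k_independent_star_bound[OF assms]) (simp add: ex_V_def)
  then show ?thesis using ex_block_bound[OF assms order_refl] by simp
qed

lemma alpha_k_ex: "alpha_k (ex_V k) (ex_E k) k \<le> (k+1) * (k+1)"
proof (rule alpha_k_le)
  show "finite (ex_V k)" by (simp add: ex_V_def)
  fix S assume S: "k_independent (ex_V k) (ex_E k) k S"
  let ?H = "insert (hub k) (block k k)"
  have "{..k} = insert k {..<k}" by auto
  then have "ex_V k = (\<Union>i<k. block k i) \<union> ?H" using ex_V_cover[of k] by auto
  then have "S \<subseteq> (\<Union>i<k. S \<inter> block k i) \<union> (S \<inter> ?H)"
    using S by (auto simp: k_independent_def)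
  then have "card S \<le> card ((\<Union>i<k. S \<inter> block k i) \<union> (S \<inter> ?H))"
    by (intro card_mono) (auto simp: block_interval)
  also have "\<dots> \<le> (\<Sum>i<k. card (S \<inter> block k i)) + card (S \<inter> ?H)"
    by (intro order.trans[OF card_Un_le] add_mono card_UN_le) auto
  also have "\<dots> \<le> k * (k+1) + (k+1)"
    using sum_bounded_above[of "{..<k}" "\<lambda>i. card (S \<inter> block k i)" "k+1"]
          ex_block_bound[OF S] ex_hub_bound[OF S] by (intro add_mono) auto
  finally show "card S \<le> (k+1) * (k+1)" by (simp add: algebra_simps)
qed

theorem mainTheorem13:
  fixes k :: nat
  assumes "k \<ge> 2"
  shows "real k / real (k + 1) \<le> f_kd k 2
         \<and> f_kd k 2 \<le> real (k + 1) / (real k + 2 + 1 / real (k + 1))"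
proof
  have "real k / real (k + 1) = 1 - real 2 / (2 * real (k+1))" by (simp add: field_simps)
  also have "\<dots> \<le> f_kd k 2" by (intro f_kd_ge alpha_k_ratio_lower)
  finally show "real k / real (k + 1) \<le> f_kd k 2" .
next
  have "ex_V k \<noteq> {}" by (simp add: ex_V_def)
  then have "f_kd k 2 \<le> real (alpha_k (ex_V k) (ex_E k) k) / real (card (ex_V k))"
    using simple_graph_ex avg_degree_ex by (intro f_kd_le) auto
  also have "\<dots> \<le> real ((k+1) * (k+1)) / real (card (ex_V k))"
    using alpha_k_ex[of k] by (intro divide_right_mono) (simp only: of_nat_le_iff, simp)
  also have "\<dots> = real (k + 1) / (real k + 2 + 1 / real (k + 1))"
    by (simp add: card_ex_V field_simps)
  finally show "f_kd k 2 \<le> real (k + 1) / (real k + 2 + 1 / real (k + 1))" .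
qed

end
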